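(* Let $p,q\in[1,\infty)$. Without assuming the Objectivity Assumption, the $L(p,q)$-aggregation method satisfies Consensus with score vectors: for every data set and every paper $a$, if all reviewers give $a$ the same recommendation $y$ ($y_{ia}=y$ for all $i$) and the same score vector ($\bar x_{ia}=\bar x_a$ for all $i$), then $s_a=y$.
   Context: Peer-review setting: a finite set $\mathcal{R}$ of reviewers, a finite set $\mathcal{P}$ of papers, and $d\ge1$ criteria. Every reviewer $i$ reviews every paper $a$, giving a score vector $\bar{x}_{ia}\in[0,10]^d$ and a recommendation $y_{ia}\in[0,10]$. A function $h:[0,10]^d\to[0,10]$ is monotonic if $\bar x\le\bar y$ componentwise implies $h(\bar x)\le h(\bar y)$. Standing assumption: each reviewer $i$ has a monotonic $h_i$ with $y_{ia}=h_i(\bar x_{ia})$ for all $a$. Score vectors of different reviewers for the same paper may differ (no Objectivity Assumption). The $L(p,q)$-aggregation method: (1) ERM step: find a monotonic $\hat h$ minimizing $\big[\sum_{i\in\mathcal{R}}\big(\sum_{a\in\mathcal{P}}|y_{ia}-h(\bar x_{ia})|^p\big)^{q/p}\big]^{1/q}$ over monotonic $h$ (only the values $h(\bar x_{ia})$ matter); among minimizers the value vector $(\hat h(\bar x_{ia}))_{i,a}$ of smallest Euclidean norm is chosen; set $\hat y_{ia}=\hat h(\bar x_{ia})$. (2) Aggregation step: the solution $(s_a)_{a\in\mathcal P}$ minimizes $\big[\sum_{i}\big(\sum_{a}|\hat y_{ia}-s_a|^p\big)^{q/p}\big]^{1/q}$ (ties broken by smallest Euclidean norm). *)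

theory Defs
  imports Complex_Main
begin

text \<open>Score vectors are functions from a finite index type 'd of criteria to the reals;
  the order on them is the pointwise (componentwise) order.\<close>

definition score_box :: "('d::finite \<Rightarrow> real) set" where
  "score_box = {v. \<forall>k. 0 \<le> v k \<and> v k \<le> 10}"

definition monotonic :: "(('d::finite \<Rightarrow> real) \<Rightarrow> real) \<Rightarrow> bool" where
  "monotonic h \<longleftrightarrow>
     (\<forall>v\<in>score_box. 0 \<le> h v \<and> h v \<le> 10) \<and>
     (\<forall>u\<in>score_box. \<forall>v\<in>score_box. u \<le> v \<longrightarrow> h u \<le> h v)"

definition Lpq_loss :: "real \<Rightarrow> real \<Rightarrow> 'r set \<Rightarrow> 'p set \<Rightarrow>
    ('r \<Rightarrow> 'p \<Rightarrow> real) \<Rightarrow> ('r \<Rightarrow> 'p \<Rightarrow> real) \<Rightarrow> real" where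
  "Lpq_loss p q R P y v =
     (\<Sum>i\<in>R. (\<Sum>a\<in>P. \<bar>y i a - v i a\<bar> powr p) powr (q / p)) powr (1 / q)"

definition mono_values :: "'r set \<Rightarrow> 'p set \<Rightarrow> ('r \<Rightarrow> 'p \<Rightarrow> ('d::finite \<Rightarrow> real))
    \<Rightarrow> ('r \<Rightarrow> 'p \<Rightarrow> real) set" where
  "mono_values R P x =
     {v. \<exists>h. monotonic h \<and> (\<forall>i\<in>R. \<forall>a\<in>P. v i a = h (x i a))}"

definition val_norm :: "'r set \<Rightarrow> 'p set \<Rightarrow> ('r \<Rightarrow> 'p \<Rightarrow> real) \<Rightarrow> real" where
  "val_norm R P v = sqrt (\<Sum>(i,a)\<in>R \<times> P. (v i a)\<^sup>2)"

definition vec_norm :: "'p set \<Rightarrow> ('p \<Rightarrow> real) \<Rightarrow> real" where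
  "vec_norm P s = sqrt (\<Sum>a\<in>P. (s a)\<^sup>2)"

definition is_erm_output :: "real \<Rightarrow> real \<Rightarrow> 'r set \<Rightarrow> 'p set \<Rightarrow>
    ('r \<Rightarrow> 'p \<Rightarrow> ('d::finite \<Rightarrow> real)) \<Rightarrow> ('r \<Rightarrow> 'p \<Rightarrow> real) \<Rightarrow>
    ('r \<Rightarrow> 'p \<Rightarrow> real) \<Rightarrow> bool" where
  "is_erm_output p q R P x y yhat \<longleftrightarrow>
     yhat \<in> mono_values R P x \<and>
     (\<forall>v\<in>mono_values R P x. Lpq_loss p q R P y yhat \<le> Lpq_loss p q R P y v) \<and>
     (\<forall>v\<in>mono_values R P x. Lpq_loss p q R P y v = Lpq_loss p q R P y yhat
         \<longrightarrow> val_norm R P yhat \<le> val_norm R P v)"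

definition is_agg_output :: "real \<Rightarrow> real \<Rightarrow> 'r set \<Rightarrow> 'p set \<Rightarrow>
    ('r \<Rightarrow> 'p \<Rightarrow> real) \<Rightarrow> ('p \<Rightarrow> real) \<Rightarrow> bool" where
  "is_agg_output p q R P yhat s \<longleftrightarrow>
     (\<forall>t. Lpq_loss p q R P yhat (\<lambda>i a. s a) \<le> Lpq_loss p q R P yhat (\<lambda>i a. t a)) \<and>
     (\<forall>t. Lpq_loss p q R P yhat (\<lambda>i a. t a) = Lpq_loss p q R P yhat (\<lambda>i a. s a)
         \<longrightarrow> vec_norm P s \<le> vec_norm P t)"

definition is_Lpq_output :: "real \<Rightarrow> real \<Rightarrow> 'r set \<Rightarrow> 'p set \<Rightarrow>
    ('r \<Rightarrow> 'p \<Rightarrow> ('d::finite \<Rightarrow> real)) \<Rightarrow> ('r \<Rightarrow> 'p \<Rightarrow> real) \<Rightarrow> ('p \<Rightarrow> real) \<Rightarrow> bool" where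
  "is_Lpq_output p q R P x y s \<longleftrightarrow>
     (\<exists>yhat. is_erm_output p q R P x y yhat \<and> is_agg_output p q R P yhat s)"

end

theory Submission
  imports Defs
begin

text \<open>If the ERM fit h had h x \<noteq> y at the consensus paper, clamp h to y at x: raise it
  to at least y above x and lower it to at most y below x. This is still monotonic, and
  since each reviewer's own monotonic function sends score vectors above (below) x to
  recommendations at least (at most) y, clamping moves every fitted value weakly towards
  the data and the one at the consensus paper strictly, contradicting minimality of the
  loss. So all fitted values at that paper equal y, and then moving s a to y would
  strictly decrease the aggregation loss unless s a = y.\<close>

lemma Lpq_loss_strict_mono:
  fixes y v w :: "'r \<Rightarrow> 'p \<Rightarrow> real"
  assumes "finite R" "finite P" "0 < p" "0 < q" "i0 \<in> R" "a \<in> P"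
    and le: "\<forall>i\<in>R. \<forall>b\<in>P. \<bar>y i b - v i b\<bar> \<le> \<bar>y i b - w i b\<bar>"
    and less: "\<bar>y i0 a - v i0 a\<bar> < \<bar>y i0 a - w i0 a\<bar>"
  shows "Lpq_loss p q R P y v < Lpq_loss p q R P y w"
proof -
  have row_le: "(\<Sum>b\<in>P. \<bar>y i b - v i b\<bar> powr p) \<le> (\<Sum>b\<in>P. \<bar>y i b - w i b\<bar> powr p)"
    if "i \<in> R" for i
    using le that \<open>0 < p\<close> by (intro sum_mono powr_mono2) auto
  have row_less: "(\<Sum>b\<in>P. \<bar>y i0 b - v i0 b\<bar> powr p) < (\<Sum>b\<in>P. \<bar>y i0 b - w i0 b\<bar> powr p)"
    using le less assms(2,3,5,6)
    by (intro sum_strict_mono_ex1) (auto intro!: bexI[of _ a] powr_mono2 powr_less_mono2)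
  have "(\<Sum>i\<in>R. (\<Sum>b\<in>P. \<bar>y i b - v i b\<bar> powr p) powr (q/p))
      < (\<Sum>i\<in>R. (\<Sum>b\<in>P. \<bar>y i b - w i b\<bar> powr p) powr (q/p))"
    using row_le row_less assms(1,3,4,5)
    by (intro sum_strict_mono_ex1) (auto intro!: bexI[of _ i0] powr_mono2 powr_less_mono2 sum_nonneg)
  then show ?thesis
    unfolding Lpq_loss_def using \<open>0 < q\<close> by (auto intro!: powr_less_mono2 sum_nonneg)
qed

lemma monotonicD:
  assumes "monotonic h" "u \<in> score_box" "v \<in> score_box" "u \<le> v"
  shows "h u \<le> h v"
  using assms unfolding monotonic_def by blast

lemma monotonic_range:
  assumes "monotonic h" "v \<in> score_box"
  shows "0 \<le> h v" "h v \<le> 10"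
  using assms unfolding monotonic_def by blast+

definition raise_above :: "'a::order \<Rightarrow> real \<Rightarrow> ('a \<Rightarrow> real) \<Rightarrow> 'a \<Rightarrow> real" where
  "raise_above x0 c h v = (if x0 \<le> v then max (h v) c else h v)"

definition lower_below :: "'a::order \<Rightarrow> real \<Rightarrow> ('a \<Rightarrow> real) \<Rightarrow> 'a \<Rightarrow> real" where
  "lower_below x0 c h v = (if v \<le> x0 then min (h v) c else h v)"

definition clamp_at :: "'a::order \<Rightarrow> real \<Rightarrow> ('a \<Rightarrow> real) \<Rightarrow> 'a \<Rightarrow> real" where
  "clamp_at x0 c h = lower_below x0 c (raise_above x0 c h)"

lemma monotonic_raise_above:
  assumes "monotonic h" "0 \<le> c" "c \<le> 10"
  shows "monotonic (raise_above x0 c h)"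
  using assms order_trans[of x0] unfolding monotonic_def raise_above_def
  by (fastforce simp: le_max_iff_disj)

lemma monotonic_lower_below:
  assumes "monotonic h" "0 \<le> c" "c \<le> 10"
  shows "monotonic (lower_below x0 c h)"
  using assms order_trans[of _ _ x0] unfolding monotonic_def lower_below_def
  by (fastforce simp: min_le_iff_disj)

lemma monotonic_clamp_at:
  assumes "monotonic h" "0 \<le> c" "c \<le> 10"
  shows "monotonic (clamp_at x0 c h)"
  unfolding clamp_at_def using assms by (intro monotonic_lower_below monotonic_raise_above)

lemma clamp_at_self: "clamp_at x0 c h x0 = c"
  unfolding clamp_at_def lower_below_def raise_above_def by simp

lemma clamp_at_closer:
  fixes t :: real
  assumes "x0 \<le> v \<Longrightarrow> c \<le> t" "v \<le> x0 \<Longrightarrow> t \<le> c"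
  shows "\<bar>t - clamp_at x0 c h v\<bar> \<le> \<bar>t - h v\<bar>"
  using assms unfolding clamp_at_def lower_below_def raise_above_def
  by (auto simp: max_def min_def abs_if)

lemma erm_output_at_consensus:
  fixes x :: "'r \<Rightarrow> 'p \<Rightarrow> ('d::finite \<Rightarrow> real)"
  assumes "0 < p" "0 < q" "finite R" "finite P" "a \<in> P"
    and scores: "\<forall>i\<in>R. \<forall>b\<in>P. x i b \<in> score_box"
    and reviewers: "\<forall>i\<in>R. \<exists>h. monotonic h \<and> (\<forall>b\<in>P. y i b = h (x i b))"
    and y_a: "\<forall>i\<in>R. y i a = ya" and x_a: "\<forall>i\<in>R. x i a = xa"
    and erm: "is_erm_output p q R P x y yhat"
    and "i0 \<in> R"
  shows "yhat i0 a = ya"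
proof -
  obtain h where "monotonic h" and yhat: "\<forall>i\<in>R. \<forall>b\<in>P. yhat i b = h (x i b)"
    using erm unfolding is_erm_output_def mono_values_def by blast
  have xa_box: "xa \<in> score_box"
    using scores x_a \<open>i0 \<in> R\<close> \<open>a \<in> P\<close> by metis
  have consensus_order:
    "(xa \<le> x i b \<longrightarrow> ya \<le> y i b) \<and> (x i b \<le> xa \<longrightarrow> y i b \<le> ya)"
    if "i \<in> R" "b \<in> P" for i b
  proof -
    obtain g where "monotonic g" and g: "\<forall>b\<in>P. y i b = g (x i b)"
      using reviewers \<open>i \<in> R\<close> by blast
    then show ?thesis
      using monotonicD[of g] scores xa_box y_a x_a that \<open>a \<in> P\<close> by metis
  qed
  have ya_range: "0 \<le> ya" "ya \<le> 10"
  proof -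
    obtain g where "monotonic g" and "\<forall>b\<in>P. y i0 b = g (x i0 b)"
      using reviewers \<open>i0 \<in> R\<close> by blast
    then show "0 \<le> ya" "ya \<le> 10"
      using monotonic_range[OF _ xa_box] y_a x_a \<open>i0 \<in> R\<close> \<open>a \<in> P\<close> by metis+
  qed
  define h' where "h' = clamp_at xa ya h"
  have "(\<lambda>i b. h' (x i b)) \<in> mono_values R P x"
    unfolding mono_values_def h'_def
    using monotonic_clamp_at[OF \<open>monotonic h\<close> ya_range] by blast
  then have not_better: "\<not> Lpq_loss p q R P y (\<lambda>i b. h' (x i b)) < Lpq_loss p q R P y yhat"
    using erm unfolding is_erm_output_def by (simp add: not_less)
  have "h xa = ya"
  proof (rule ccontr)
    assume "h xa \<noteq> ya"
    have "Lpq_loss p q R P y (\<lambda>i b. h' (x i b)) < Lpq_loss p q R P y yhat"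
    proof (rule Lpq_loss_strict_mono[OF assms(3,4,1,2) \<open>i0 \<in> R\<close> \<open>a \<in> P\<close>])
      show "\<forall>i\<in>R. \<forall>b\<in>P. \<bar>y i b - h' (x i b)\<bar> \<le> \<bar>y i b - yhat i b\<bar>"
        using consensus_order yhat unfolding h'_def by (simp add: clamp_at_closer)
      show "\<bar>y i0 a - h' (x i0 a)\<bar> < \<bar>y i0 a - yhat i0 a\<bar>"
        using \<open>h xa \<noteq> ya\<close> yhat y_a x_a \<open>i0 \<in> R\<close> \<open>a \<in> P\<close>
        unfolding h'_def by (simp add: clamp_at_self)
    qed
    with not_better show False ..
  qed
  then show ?thesis
    using yhat x_a \<open>i0 \<in> R\<close> \<open>a \<in> P\<close> by simp
qed

lemma agg_output_at_consensus:
  assumes "0 < p" "0 < q" "finite R" "R \<noteq> {}" "finite P" "a \<in> P"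
    and yhat_a: "\<forall>i\<in>R. yhat i a = c"
    and agg: "is_agg_output p q R P yhat s"
  shows "s a = c"
proof (rule ccontr)
  assume "s a \<noteq> c"
  obtain i0 where "i0 \<in> R" using \<open>R \<noteq> {}\<close> by blast
  have "Lpq_loss p q R P yhat (\<lambda>i b. (s(a := c)) b) < Lpq_loss p q R P yhat (\<lambda>i b. s b)"
    using yhat_a \<open>s a \<noteq> c\<close> \<open>i0 \<in> R\<close>
    by (intro Lpq_loss_strict_mono[OF assms(3,5,1,2) \<open>i0 \<in> R\<close> \<open>a \<in> P\<close>]) auto
  moreover have "Lpq_loss p q R P yhat (\<lambda>i b. s b) \<le> Lpq_loss p q R P yhat (\<lambda>i b. (s(a := c)) b)"
    using agg unfolding is_agg_output_def by blast
  ultimately show False by linarith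
qed

theorem proposition4p2:
  fixes p q :: real
    and R :: "'r set" and P :: "'p set"
    and x :: "'r \<Rightarrow> 'p \<Rightarrow> ('d::finite \<Rightarrow> real)"
    and y :: "'r \<Rightarrow> 'p \<Rightarrow> real"
    and s :: "'p \<Rightarrow> real"
    and a :: 'p and xa :: "'d \<Rightarrow> real" and ya :: real
  assumes "1 \<le> p" and "1 \<le> q"
    and "finite R" and "R \<noteq> {}" and "finite P"
    and "\<forall>i\<in>R. \<forall>b\<in>P. x i b \<in> score_box"
    and "\<forall>i\<in>R. \<forall>b\<in>P. 0 \<le> y i b \<and> y i b \<le> 10"
    and "\<forall>i\<in>R. \<exists>h. monotonic h \<and> (\<forall>b\<in>P. y i b = h (x i b))"
    and "a \<in> P"
    and "\<forall>i\<in>R. y i a = ya" and "\<forall>i\<in>R. x i a = xa"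
    and "is_Lpq_output p q R P x y s"
  shows "s a = ya"
proof -
  have "0 < p" "0 < q" using assms(1,2) by auto
  obtain yhat where erm: "is_erm_output p q R P x y yhat"
    and agg: "is_agg_output p q R P yhat s"
    using assms(12) unfolding is_Lpq_output_def by blast
  have "\<forall>i\<in>R. yhat i a = ya"
    using erm_output_at_consensus[OF \<open>0 < p\<close> \<open>0 < q\<close> assms(3,5,9,6,8,10,11) erm] by blast
  then show ?thesis
    using agg_output_at_consensus[OF \<open>0 < p\<close> \<open>0 < q\<close> assms(3,4,5,9) _ agg] by blast
qed

end
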